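(* Let $G$ be a finite bipartite graph and let $H$ be a $2$-lift of $G$. Then for every $k\geq0$, $$m_k(G\cup G)\geq m_k(H),$$ where $G\cup G$ is the disjoint union of two copies of $G$. In particular, for every $t\geq0$, $M(G,t)^2\geq M(H,t)$.
   Context: $m_k(\cdot)$ denotes the number of matchings of size $k$ and $M(G,t)=\sum_k m_k(G)t^k$. A graph $H$ is a $2$-lift of $G$ if $V(H)=V(G)\times\{0,1\}$ and for every edge $(u,v)\in E(G)$ exactly one of the following holds: $((u,0),(v,0))$ and $((u,1),(v,1))$ are edges of $H$, or $((u,0),(v,1))$ and $((u,1),(v,0))$ are edges of $H$; and if $(u,v)\notin E(G)$ then none of these four pairs is an edge of $H$. *)

theory Defs
  imports Complex_Main
begin

definition simple_graph :: "'a set \<Rightarrow> 'a set set \<Rightarrow> bool" where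
  "simple_graph V E \<longleftrightarrow> finite V \<and>
     (\<forall>e\<in>E. \<exists>u v. u \<in> V \<and> v \<in> V \<and> u \<noteq> v \<and> e = {u, v})"

definition bipartite :: "'a set \<Rightarrow> 'a set set \<Rightarrow> bool" where
  "bipartite V E \<longleftrightarrow> (\<exists>A. A \<subseteq> V \<and> (\<forall>u v. {u, v} \<in> E \<longrightarrow> (u \<in> A \<longleftrightarrow> v \<notin> A)))"

definition matching :: "'a set set \<Rightarrow> 'a set set \<Rightarrow> bool" where
  "matching E M \<longleftrightarrow> M \<subseteq> E \<and> (\<forall>e\<in>M. \<forall>f\<in>M. e \<noteq> f \<longrightarrow> e \<inter> f = {})"

definition num_matchings :: "'a set set \<Rightarrow> nat \<Rightarrow> nat" where
  "num_matchings E k = card {M. matching E M \<and> card M = k}"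

text \<open>Matching polynomial M(G,t) = sum_k m_k(G) t^k (m_k = 0 for k > |E|).\<close>
definition matching_poly :: "'a set set \<Rightarrow> real \<Rightarrow> real" where
  "matching_poly E t = (\<Sum>k\<le>card E. real (num_matchings E k) * t ^ k)"

definition two_lift :: "'a set \<Rightarrow> 'a set set \<Rightarrow> ('a \<times> bool) set set \<Rightarrow> bool" where
  "two_lift V E EH \<longleftrightarrow>
     (\<forall>e\<in>EH. \<exists>u v i j. u \<in> V \<and> v \<in> V \<and> e = {(u, i), (v, j)}) \<and>
     (\<forall>u\<in>V. \<forall>v\<in>V.
        ({u, v} \<in> E \<longrightarrow>
           (({(u,False),(v,False)} \<in> EH \<and> {(u,True),(v,True)} \<in> EH \<and>
             {(u,False),(v,True)} \<notin> EH \<and> {(u,True),(v,False)} \<notin> EH) \<or>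
            ({(u,False),(v,True)} \<in> EH \<and> {(u,True),(v,False)} \<in> EH \<and>
             {(u,False),(v,False)} \<notin> EH \<and> {(u,True),(v,True)} \<notin> EH))) \<and>
        ({u, v} \<notin> E \<longrightarrow>
           {(u,False),(v,False)} \<notin> EH \<and> {(u,True),(v,True)} \<notin> EH \<and>
           {(u,False),(v,True)} \<notin> EH \<and> {(u,True),(v,False)} \<notin> EH))"

definition double_graph :: "'a set set \<Rightarrow> ('a \<times> bool) set set" where
  "double_graph E = {(\<lambda>x. (x, i)) ` e | e i. e \<in> E}"

end

theory Submission
  imports Defs
begin

text \<open>Let the bipartite graph G have its edges e join a e in one colour class to b e in the other.
  A 2-lift H of G is then described by a signature s: the copies of e are the edges joining
  (a e, i) and (b e, i \<noteq> s e), and G \<union> G is the lift with the trivial signature.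
  A matching of a lift is a set P of pairs (e, i), and its shadow records how often each edge of G
  is used. Flipping the layers of P along some edges preserves the shadow, and the conditions for
  the result to be a matching are parity conditions. Hence for every shadow the flip carrying one
  reference matching of H onto a matching of G \<union> G with the same shadow carries every
  matching of H with that shadow injectively into the matchings of G \<union> G. Such a target
  exists because the edges used once form a bipartite graph of maximum degree two, which is
  2-edge-colourable. Thus m_k(H) \<le> m_k(G \<union> G), and M(G \<union> G, t) = M(G, t)^2
  gives the inequality for the matching polynomials when t \<ge> 0.\<close>

section \<open>Edge colourings of bipartite graphs of maximum degree two\<close>

definition degree_le_two :: "'e set \<Rightarrow> ('e \<Rightarrow> 'v) \<Rightarrow> bool" where
  "degree_le_two F a \<longleftrightarrow>
     (\<forall>e1\<in>F. \<forall>e2\<in>F. \<forall>e3\<in>F. e1 \<noteq> e2 \<longrightarrow> e1 \<noteq> e3 \<longrightarrow> e2 \<noteq> e3 \<longrightarrow> a e1 = a e2 \<longrightarrow> a e1 \<noteq> a e3)"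

definition proper_edge_colouring :: "'e set \<Rightarrow> ('e \<Rightarrow> 'v) \<Rightarrow> ('e \<Rightarrow> 'v) \<Rightarrow> ('e \<Rightarrow> bool) \<Rightarrow> bool" where
  "proper_edge_colouring F a b col \<longleftrightarrow>
     (\<forall>e\<in>F. \<forall>e'\<in>F. e \<noteq> e' \<longrightarrow> a e = a e' \<or> b e = b e' \<longrightarrow> col e \<noteq> col e')"

lemma degree_le_two_subset: "degree_le_two F a \<Longrightarrow> G \<subseteq> F \<Longrightarrow> degree_le_two G a"
  unfolding degree_le_two_def by blast

lemma degree_le_twoD:
  "degree_le_two F a \<Longrightarrow> e1 \<in> F \<Longrightarrow> e2 \<in> F \<Longrightarrow> e3 \<in> F \<Longrightarrow> e1 \<noteq> e2 \<Longrightarrow> e1 \<noteq> e3 \<Longrightarrow> e2 \<noteq> e3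
   \<Longrightarrow> a e1 = a e2 \<Longrightarrow> a e1 = a e3 \<Longrightarrow> False"
  unfolding degree_le_two_def by blast

lemma proper_edge_colouring_swap: "proper_edge_colouring F a b col = proper_edge_colouring F b a col"
  unfolding proper_edge_colouring_def by blast

lemma degree_le_two_merge:
  assumes deg: "degree_le_two F b" and e: "e1 \<in> F" "e2 \<in> F" "e1 \<noteq> e2"
  shows "degree_le_two (F - {e1, e2}) (\<lambda>e. if b e = b e2 then b e1 else b e)"
  unfolding degree_le_two_def
proof (intro ballI impI notI)
  fix x y z
  assume xyz: "x \<in> F - {e1, e2}" "y \<in> F - {e1, e2}" "z \<in> F - {e1, e2}" "x \<noteq> y" "x \<noteq> z" "y \<noteq> z"
    and merged: "(if b x = b e2 then b e1 else b x) = (if b y = b e2 then b e1 else b y)"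
      "(if b x = b e2 then b e1 else b x) = (if b z = b e2 then b e1 else b z)"
  have no_pair: False
    if "u \<in> F - {e1, e2}" "w \<in> F - {e1, e2}" "u \<noteq> w" "b u = b w" "b u = b e1 \<or> b u = b e2" for u w
    using that degree_le_twoD[OF deg e(1), of u w] degree_le_twoD[OF deg e(2), of u w] by auto
  show False
  proof (cases "b x = b e1 \<or> b x = b e2")
    case True
    then have "b y = b e1 \<or> b y = b e2" "b z = b e1 \<or> b z = b e2"
      using merged by (auto split: if_splits)
    then show False
      using True no_pair[of x y] no_pair[of x z] no_pair[of y z] xyz by metis
  next
    case False
    then have "b x = b y" "b x = b z" using merged by (auto split: if_splits)
    then show False using degree_le_twoD[OF deg, of x y z] xyz by blast
  qed
qed

lemma merged_colouring_choice:
  assumes deg_b: "degree_le_two F b" and e: "e1 \<in> F" "e2 \<in> F" "e1 \<noteq> e2"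
    and col: "proper_edge_colouring (F - {e1, e2}) a (\<lambda>e. if b e = b e2 then b e1 else b e) col"
  obtains c where "\<forall>f\<in>F - {e1, e2}. b f = b e1 \<longrightarrow> col f \<noteq> c"
    and "\<forall>f\<in>F - {e1, e2}. b f = b e2 \<longrightarrow> col f = c"
proof -
  define F' where "F' = F - {e1, e2}"
  have unique: "f = f'" if "f \<in> F'" "f' \<in> F'" "b f = b e" "b f' = b e" "e \<in> {e1, e2}" for f f' e
  proof (rule ccontr)
    assume "f \<noteq> f'"
    moreover have "e \<in> F" "f \<in> F" "f' \<in> F" "e \<noteq> f" "e \<noteq> f'" using that e unfolding F'_def by auto
    ultimately show False using that(3,4) by (intro degree_le_twoD[OF deg_b, of e f f']) simp_all
  qed
  have no_shared_b: "b e1 \<noteq> b e2" if "f \<in> F'" "b f = b e1" for f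
  proof
    assume "b e1 = b e2"
    moreover have "f \<in> F" "e1 \<noteq> f" "e2 \<noteq> f" using that unfolding F'_def by auto
    ultimately show False using degree_le_twoD[OF deg_b e(1,2), of f] e(3) that(2) by simp
  qed
  have col_F': "col f \<noteq> col f'" if "f \<in> F'" "f' \<in> F'" "f \<noteq> f'" "b f = b e1" "b f' = b e2" for f f'
  proof -
    have "(if b f = b e2 then b e1 else b f) = (if b f' = b e2 then b e1 else b f')"
      using that(4,5) by simp
    then show ?thesis using col that(1-3) unfolding proper_edge_colouring_def F'_def by blast
  qed
  show thesis
  proof (cases "\<exists>f2\<in>F'. b f2 = b e2")
    case True
    then obtain f2 where f2: "f2 \<in> F'" "b f2 = b e2" by blast
    show thesis
    proof (rule that[of "col f2", folded F'_def])
      show "\<forall>f\<in>F'. b f = b e1 \<longrightarrow> col f \<noteq> col f2"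
        using col_F' f2 no_shared_b by metis
      show "\<forall>f\<in>F'. b f = b e2 \<longrightarrow> col f = col f2"
        using unique f2 by blast
    qed
  next
    case no_f2: False
    show thesis
    proof (cases "\<exists>f1\<in>F'. b f1 = b e1")
      case True
      then obtain f1 where "f1 \<in> F'" "b f1 = b e1" by blast
      then show thesis using that[of "\<not> col f1", folded F'_def] unique no_f2 by blast
    qed (use that[folded F'_def] no_f2 in blast)
  qed
qed

lemma proper_edge_colouring_extend:
  assumes deg_a: "degree_le_two F a" and deg_b: "degree_le_two F b"
    and e: "e1 \<in> F" "e2 \<in> F" "e1 \<noteq> e2" "a e1 = a e2"
    and col: "proper_edge_colouring (F - {e1, e2}) a (\<lambda>e. if b e = b e2 then b e1 else b e) col"
  shows "\<exists>col. proper_edge_colouring F a b col"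
proof -
  define F' where "F' = F - {e1, e2}"
  obtain c where c1: "\<forall>f\<in>F'. b f = b e1 \<longrightarrow> col f \<noteq> c" and c2: "\<forall>f\<in>F'. b f = b e2 \<longrightarrow> col f = c"
    using merged_colouring_choice[OF deg_b e(1-3) col] unfolding F'_def by blast
  have no_a: "a f \<noteq> a e1" if "f \<in> F'" for f
  proof
    assume "a f = a e1"
    moreover have "f \<in> F" "e1 \<noteq> f" "e2 \<noteq> f" using that unfolding F'_def by auto
    ultimately show False using degree_le_twoD[OF deg_a e(1,2), of f] e(3,4) by simp
  qed
  define col' where "col' = col(e1 := c, e2 := \<not> c)"
  have old: "col' f \<noteq> col' f'" if "f \<in> F'" "f' \<in> F'" "f \<noteq> f'" "a f = a f' \<or> b f = b f'" for f f'
  proof -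
    have "a f = a f' \<or> (if b f = b e2 then b e1 else b f) = (if b f' = b e2 then b e1 else b f')"
      using that(4) by auto
    then have "col f \<noteq> col f'" using col that(1-3) unfolding proper_edge_colouring_def F'_def by blast
    then show ?thesis using that(1,2) unfolding col'_def F'_def by auto
  qed
  have new: "col' f \<noteq> col' g" if "f \<in> {e1, e2}" "g \<in> F'" "a f = a g \<or> b f = b g" for f g
  proof -
    have "b g = b f" using that no_a[OF that(2)] e(4) by auto
    then show ?thesis using that c1 c2 e(3) unfolding col'_def F'_def by auto
  qed
  have "proper_edge_colouring F a b col'"
    unfolding proper_edge_colouring_def
  proof (intro ballI impI)
    fix f f' assume f: "f \<in> F" "f' \<in> F" "f \<noteq> f'" and adj: "a f = a f' \<or> b f = b f'"
    consider "f \<in> F'" "f' \<in> F'" | "f \<in> {e1, e2}" "f' \<in> F'" | "f \<in> F'" "f' \<in> {e1, e2}"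
      | "f \<in> {e1, e2}" "f' \<in> {e1, e2}"
      using f(1,2) unfolding F'_def by blast
    then show "col' f \<noteq> col' f'"
    proof cases
      case 1
      then show ?thesis using old f(3) adj by blast
    next
      case 2
      then show ?thesis using new adj by blast
    next
      case 3
      then show ?thesis using new[of f' f] adj by auto
    next
      case 4
      then show ?thesis using f(3) e(3) unfolding col'_def by auto
    qed
  qed
  then show ?thesis by blast
qed

text \<open>Deleting two edges e1, e2 that share an a-vertex and merging their b-vertices keeps all
  degrees at most two; a colouring of the smaller graph extends by giving e1 and e2 opposite
  colours.\<close>
theorem proper_edge_colouring_exists:
  assumes "finite F" "degree_le_two F a" "degree_le_two F b"
  shows "\<exists>col. proper_edge_colouring F a b col"
  using assms
proof (induction F arbitrary: a b rule: finite_psubset_induct)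
  case (psubset F)
  have merge: "\<exists>col. proper_edge_colouring F a b col"
    if deg: "degree_le_two F a" "degree_le_two F b" and e: "e1 \<in> F" "e2 \<in> F" "e1 \<noteq> e2" "a e1 = a e2"
    for a b :: "'a \<Rightarrow> 'b" and e1 e2
  proof -
    have "F - {e1, e2} \<subset> F" using e by blast
    from psubset.IH[OF this degree_le_two_subset[OF deg(1) Diff_subset] degree_le_two_merge[OF deg(2) e(1-3)]]
    show ?thesis using proper_edge_colouring_extend[OF deg e] by blast
  qed
  consider "\<exists>e1\<in>F. \<exists>e2\<in>F. e1 \<noteq> e2 \<and> a e1 = a e2" | "\<exists>e1\<in>F. \<exists>e2\<in>F. e1 \<noteq> e2 \<and> b e1 = b e2"
    | "\<forall>e1\<in>F. \<forall>e2\<in>F. e1 \<noteq> e2 \<longrightarrow> a e1 \<noteq> a e2 \<and> b e1 \<noteq> b e2"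
    by blast
  then show ?case
  proof cases
    case 1
    then show ?thesis using merge[OF psubset.prems] by blast
  next
    case 2
    then show ?thesis using merge[OF psubset.prems(2,1)] proper_edge_colouring_swap by blast
  next
    case 3
    then have "proper_edge_colouring F a b (\<lambda>_. True)" unfolding proper_edge_colouring_def by blast
    then show ?thesis by blast
  qed
qed

section \<open>Matchings of 2-lifts\<close>

text \<open>The lifted edge (e, i) joins (a e, i) and (b e, i \<noteq> s e). Endpoints are compared only
  a-side with a-side and b-side with b-side: this is where bipartiteness of the base graph enters.\<close>
fun lift_disjoint :: "('e \<Rightarrow> 'v) \<Rightarrow> ('e \<Rightarrow> 'v) \<Rightarrow> ('e \<Rightarrow> bool) \<Rightarrow> 'e \<times> bool \<Rightarrow> 'e \<times> bool \<Rightarrow> bool" where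
  "lift_disjoint a b s (e, i) (e', j) \<longleftrightarrow>
     \<not> (a e = a e' \<and> i = j) \<and> \<not> (b e = b e' \<and> (i \<noteq> s e) = (j \<noteq> s e'))"

definition lift_matching :: "('e \<Rightarrow> 'v) \<Rightarrow> ('e \<Rightarrow> 'v) \<Rightarrow> ('e \<Rightarrow> bool) \<Rightarrow> ('e \<times> bool) set \<Rightarrow> bool" where
  "lift_matching a b s = pairwise (lift_disjoint a b s)"

definition shadow :: "('e \<times> bool) set \<Rightarrow> 'e \<Rightarrow> nat" where
  "shadow P e = card {i. (e, i) \<in> P}"

definition flip_layers :: "('e \<Rightarrow> bool) \<Rightarrow> ('e \<times> bool) set \<Rightarrow> ('e \<times> bool) set" where
  "flip_layers d P = (\<lambda>(e, i). (e, i \<noteq> d e)) -` P"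

lemma shadow_eq: "shadow P e = of_bool ((e, True) \<in> P) + of_bool ((e, False) \<in> P)"
proof -
  have "{i. (e, i) \<in> P} = (if (e, True) \<in> P then {True} else {}) \<union> (if (e, False) \<in> P then {False} else {})"
  proof (rule set_eqI)
    fix i
    show "i \<in> {i. (e, i) \<in> P} \<longleftrightarrow> i \<in> (if (e, True) \<in> P then {True} else {}) \<union> (if (e, False) \<in> P then {False} else {})"
      by (cases i) auto
  qed
  then show ?thesis unfolding shadow_def by (cases "(e, True) \<in> P"; cases "(e, False) \<in> P") simp_all
qed

lemma shadow_pos_iff: "shadow P e \<noteq> 0 \<longleftrightarrow> (\<exists>i. (e, i) \<in> P)"
  by (simp add: shadow_eq ex_bool_eq)

lemma layer_if_shadow_one: "shadow P e = 1 \<Longrightarrow> (e, i) \<in> P \<longleftrightarrow> i = ((e, True) \<in> P)"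
  by (cases i; cases "(e, True) \<in> P"; cases "(e, False) \<in> P") (simp_all add: shadow_eq)

lemma shadow_two_iff: "shadow P e = 2 \<longleftrightarrow> (e, True) \<in> P \<and> (e, False) \<in> P"
  by (cases "(e, True) \<in> P"; cases "(e, False) \<in> P") (simp_all add: shadow_eq)

lemma shadow_le_two: "shadow P e \<le> 2"
  by (simp add: shadow_eq)

lemma mem_flip_layers [simp]: "(e, j) \<in> flip_layers d P \<longleftrightarrow> (e, j \<noteq> d e) \<in> P"
  by (simp add: flip_layers_def)

lemma flip_layers_flip_layers [simp]: "flip_layers d (flip_layers d P) = P"
proof (rule set_eqI)
  fix x :: "'a \<times> bool"
  obtain e i where "x = (e, i)" by fastforce
  then show "x \<in> flip_layers d (flip_layers d P) \<longleftrightarrow> x \<in> P" by (cases "d e") simp_all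
qed

lemma card_flip_layers: "card (flip_layers d P) = card P"
proof -
  define g :: "'a \<times> bool \<Rightarrow> 'a \<times> bool" where "g = (\<lambda>(e, i). (e, i \<noteq> d e))"
  have invol: "g (g x) = x" for x unfolding g_def by (cases x; cases "d (fst x)") auto
  then have "inj g" "surj g" by (metis injI, metis surjI)
  moreover have "flip_layers d P = g -` P" unfolding flip_layers_def g_def ..
  ultimately show ?thesis by (simp add: card_vimage_inj)
qed

lemma shadow_flip_layers [simp]: "shadow (flip_layers d P) = shadow P"
proof (rule ext)
  fix e
  show "shadow (flip_layers d P) e = shadow P e" by (cases "d e") (simp_all add: shadow_eq)
qed

lemma flip_layers_subset: "P \<subseteq> X \<times> UNIV \<Longrightarrow> flip_layers d P \<subseteq> X \<times> UNIV"
  by (auto simp: flip_layers_def)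

lemma subset_if_same_shadow:
  assumes "shadow Q = shadow P" "P \<subseteq> X \<times> UNIV"
  shows "Q \<subseteq> X \<times> UNIV"
proof
  fix x assume "x \<in> Q"
  obtain e i where x: "x = (e, i)" by fastforce
  then have "shadow P e \<noteq> 0" using \<open>x \<in> Q\<close> assms(1) shadow_pos_iff by metis
  then obtain j where "(e, j) \<in> P" using shadow_pos_iff[of P e] by blast
  then show "x \<in> X \<times> UNIV" using assms(2) x by auto
qed

lemma lift_matchingD:
  "lift_matching a b s P \<Longrightarrow> p \<in> P \<Longrightarrow> q \<in> P \<Longrightarrow> p \<noteq> q \<Longrightarrow> lift_disjoint a b s p q"
  unfolding lift_matching_def by (rule pairwiseD)

lemma lift_matchingI:
  assumes "\<And>e i e' j. (e, i) \<in> P \<Longrightarrow> (e', j) \<in> P \<Longrightarrow> (e, i) \<noteq> (e', j) \<Longrightarrow> lift_disjoint a b s (e, i) (e', j)"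
  shows "lift_matching a b s P"
  unfolding lift_matching_def pairwise_def
proof (intro ballI impI)
  fix p q assume "p \<in> P" "q \<in> P" "p \<noteq> q"
  then show "lift_disjoint a b s p q" using assms[of "fst p" "snd p" "fst q" "snd q"] by simp
qed

lemma lift_matching_doubled_isolated:
  assumes P: "lift_matching a b s P" and "shadow P e = 2" "(e', j) \<in> P" "e' \<noteq> e"
  shows "a e \<noteq> a e' \<and> b e \<noteq> b e'"
proof -
  have "(e, True) \<in> P" "(e, False) \<in> P" using assms(2) by (simp_all add: shadow_two_iff)
  then have "(e, i) \<in> P" for i by (cases i) simp_all
  then have "lift_disjoint a b s (e, i) (e', j)" for i
    using lift_matchingD[OF P _ assms(3)] assms(4) by blast
  from this[of j] this[of "(j \<noteq> s e') \<noteq> s e"] show ?thesis by auto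
qed

lemma lift_matching_adjacent_single:
  assumes P: "lift_matching a b s P" and "(e, i) \<in> P" "(e', j) \<in> P" "e \<noteq> e'"
    and "a e = a e' \<or> b e = b e'"
  shows "shadow P e = 1"
proof -
  have "shadow P e \<noteq> 0" using assms(2) shadow_pos_iff[of P e] by blast
  moreover have "shadow P e \<noteq> 2"
    using lift_matching_doubled_isolated[OF P _ assms(3)] assms(4,5) by auto
  moreover have "shadow P e \<le> 2" by (rule shadow_le_two)
  ultimately show ?thesis by linarith
qed

lemma lift_disjoint_layers:
  assumes P: "lift_matching a b s P" and "shadow P e = 1" "shadow P e' = 1" "e \<noteq> e'"
  shows "lift_disjoint a b s (e, (e, True) \<in> P) (e', (e', True) \<in> P)"
proof (rule lift_matchingD[OF P])
  show "(e, (e, True) \<in> P) \<in> P" using layer_if_shadow_one[OF assms(2)] by blast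
  show "(e', (e', True) \<in> P) \<in> P" using layer_if_shadow_one[OF assms(3)] by blast
qed (use assms(4) in simp)

text \<open>Switching: whether a flip of layers yields a lift matching depends only on parities along
  the edges used once, so the flip taking P0 to Q0 also turns every other lift matching P with the
  same shadow into a lift matching for the signature of Q0.\<close>
lemma lift_matching_flip_layers:
  assumes P: "lift_matching a b s P" and P0: "lift_matching a b s P0" and Q0: "lift_matching a b s' Q0"
    and shadows: "shadow P0 = shadow P" "shadow Q0 = shadow P"
  shows "lift_matching a b s' (flip_layers (\<lambda>e. ((e, True) \<in> P0) \<noteq> ((e, True) \<in> Q0)) P)"
proof -
  define d where "d = (\<lambda>e. ((e, True) \<in> P0) \<noteq> ((e, True) \<in> Q0))"
  have "lift_matching a b s' (flip_layers d P)"
  proof (rule lift_matchingI)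
    fix e i e' j
    assume mem: "(e, i) \<in> flip_layers d P" "(e', j) \<in> flip_layers d P" and ne: "(e, i) \<noteq> (e', j)"
    show "lift_disjoint a b s' (e, i) (e', j)"
    proof (cases "e \<noteq> e' \<and> (a e = a e' \<or> b e = b e')")
      case True
      have in_P: "(e, i \<noteq> d e) \<in> P" "(e', j \<noteq> d e') \<in> P" using mem by simp_all
      have single: "shadow P e = 1" "shadow P e' = 1"
        using lift_matching_adjacent_single[OF P in_P(1,2)] lift_matching_adjacent_single[OF P in_P(2,1)] True
        by auto
      have "(i \<noteq> d e) = ((e, True) \<in> P)" "(j \<noteq> d e') = ((e', True) \<in> P)"
        using in_P layer_if_shadow_one[OF single(1), of "i \<noteq> d e"]
          layer_if_shadow_one[OF single(2), of "j \<noteq> d e'"] by simp_all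
      then have "i = (((e, True) \<in> P) \<noteq> d e)" "j = (((e', True) \<in> P) \<noteq> d e')" by auto
      moreover have "lift_disjoint a b s (e, (e, True) \<in> P) (e', (e', True) \<in> P)"
        using lift_disjoint_layers[OF P single] True by blast
      moreover have "lift_disjoint a b s (e, (e, True) \<in> P0) (e', (e', True) \<in> P0)"
        using lift_disjoint_layers[OF P0] single shadows True by simp
      moreover have "lift_disjoint a b s' (e, (e, True) \<in> Q0) (e', (e', True) \<in> Q0)"
        using lift_disjoint_layers[OF Q0] single shadows True by simp
      ultimately show ?thesis unfolding d_def by auto
    qed (use ne in auto)
  qed
  then show ?thesis unfolding d_def .
qed

lemma bool_pigeonhole: "(x :: bool) \<noteq> y \<Longrightarrow> x \<noteq> z \<Longrightarrow> y \<noteq> z \<Longrightarrow> False"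
  by (cases x; cases y; cases z) simp_all

lemma degree_le_two_single_edges:
  assumes P: "lift_matching a b s P"
  shows "degree_le_two {e. shadow P e = 1} a" "degree_le_two {e. shadow P e = 1} b"
proof -
  define l where "l e = ((e, True) \<in> P)" for e
  have layers: "lift_disjoint a b s (e, l e) (e', l e')"
    if "e \<in> {e. shadow P e = 1}" "e' \<in> {e. shadow P e = 1}" "e \<noteq> e'" for e e'
    using lift_disjoint_layers[OF P, of e e'] that unfolding l_def by simp
  show "degree_le_two {e. shadow P e = 1} a"
    unfolding degree_le_two_def
  proof (intro ballI impI notI)
    fix e1 e2 e3 assume e: "e1 \<in> {e. shadow P e = 1}" "e2 \<in> {e. shadow P e = 1}" "e3 \<in> {e. shadow P e = 1}"
      "e1 \<noteq> e2" "e1 \<noteq> e3" "e2 \<noteq> e3" "a e1 = a e2" "a e1 = a e3"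
    then have "l e1 \<noteq> l e2" "l e1 \<noteq> l e3" "l e2 \<noteq> l e3"
      using layers[OF e(1,2,4)] layers[OF e(1,3,5)] layers[OF e(2,3,6)] by auto
    then show False by (rule bool_pigeonhole)
  qed
  show "degree_le_two {e. shadow P e = 1} b"
    unfolding degree_le_two_def
  proof (intro ballI impI notI)
    fix e1 e2 e3 assume e: "e1 \<in> {e. shadow P e = 1}" "e2 \<in> {e. shadow P e = 1}" "e3 \<in> {e. shadow P e = 1}"
      "e1 \<noteq> e2" "e1 \<noteq> e3" "e2 \<noteq> e3" "b e1 = b e2" "b e1 = b e3"
    then have "(l e1 \<noteq> s e1) \<noteq> (l e2 \<noteq> s e2)" "(l e1 \<noteq> s e1) \<noteq> (l e3 \<noteq> s e3)"
      "(l e2 \<noteq> s e2) \<noteq> (l e3 \<noteq> s e3)"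
      using layers[OF e(1,2,4)] layers[OF e(1,3,5)] layers[OF e(2,3,6)] by auto
    then show False by (rule bool_pigeonhole)
  qed
qed

definition lift_matchings :: "'e set \<Rightarrow> ('e \<Rightarrow> 'v) \<Rightarrow> ('e \<Rightarrow> 'v) \<Rightarrow> ('e \<Rightarrow> bool) \<Rightarrow> ('e \<times> bool) set set" where
  "lift_matchings X a b s = {P. P \<subseteq> X \<times> UNIV \<and> lift_matching a b s P}"

lemma finite_lift_matchings: "finite X \<Longrightarrow> finite (lift_matchings X a b s)"
  unfolding lift_matchings_def
  by (rule finite_subset[of _ "Pow (X \<times> UNIV)"]) (auto simp: finite_cartesian_product)

text \<open>The edges used once by a lift matching form a bipartite graph of maximum degree two; a proper
  2-edge-colouring of it is a choice of layers for a matching of the trivial lift.\<close>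
lemma trivial_lift_matching_from_colouring:
  assumes P: "lift_matching a b s P" and col: "proper_edge_colouring {e. shadow P e = 1} a b col"
  defines "Q \<equiv> {(e, i). shadow P e = 2 \<or> (shadow P e = 1 \<and> i = col e)}"
  shows "lift_matching a b (\<lambda>_. False) Q" "shadow Q = shadow P"
proof -
  show "shadow Q = shadow P"
  proof (rule ext)
    fix e
    have "shadow P e = 0 \<or> shadow P e = 1 \<or> shadow P e = 2" using shadow_le_two[of P e] by linarith
    then have "of_bool ((e, True) \<in> Q) + of_bool ((e, False) \<in> Q) = shadow P e"
      unfolding Q_def by (cases "col e") auto
    then show "shadow Q e = shadow P e" by (simp only: shadow_eq)
  qed
  show "lift_matching a b (\<lambda>_. False) Q"
  proof (rule lift_matchingI)
    fix e i e' j assume Q: "(e, i) \<in> Q" "(e', j) \<in> Q" and ne: "(e, i) \<noteq> (e', j)"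
    show "lift_disjoint a b (\<lambda>_. False) (e, i) (e', j)"
    proof (cases "e = e'")
      case False
      have covered: "shadow P e \<noteq> 0" "shadow P e' \<noteq> 0" using Q unfolding Q_def by auto
      have isolated: "a u \<noteq> a w \<and> b u \<noteq> b w"
        if doubled: "shadow P u = 2" and covered: "shadow P w \<noteq> 0" and "u \<noteq> w" for u w
      proof -
        obtain j where "(w, j) \<in> P" using covered shadow_pos_iff[of P w] by blast
        then show ?thesis using lift_matching_doubled_isolated[OF P doubled] \<open>u \<noteq> w\<close> by blast
      qed
      consider "shadow P e = 2" | "shadow P e' = 2"
        | "shadow P e = 1" "shadow P e' = 1" "i = col e" "j = col e'"
        using Q unfolding Q_def by auto
      then show ?thesis
      proof cases
        case 1
        then show ?thesis using isolated[OF 1 covered(2) False] by simp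
      next
        case 2
        then show ?thesis using isolated[OF 2 covered(1)] False by auto
      next
        case 3
        then have "a e = a e' \<or> b e = b e' \<Longrightarrow> col e \<noteq> col e'"
          using col False unfolding proper_edge_colouring_def by blast
        then show ?thesis using 3(3,4) by auto
      qed
    qed (use ne in simp)
  qed
qed

lemma trivial_lift_matching_same_shadow:
  assumes X: "finite X" and P: "P \<in> lift_matchings X a b s"
  obtains Q where "Q \<in> lift_matchings X a b (\<lambda>_. False)" "shadow Q = shadow P"
proof -
  have sub: "P \<subseteq> X \<times> UNIV" and matching: "lift_matching a b s P"
    using P unfolding lift_matchings_def by auto
  have "{e. shadow P e = 1} \<subseteq> X"
  proof
    fix e assume "e \<in> {e. shadow P e = 1}"
    then obtain i where "(e, i) \<in> P" using shadow_pos_iff[of P e] by auto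
    then show "e \<in> X" using sub by auto
  qed
  then have "finite {e. shadow P e = 1}" using X by (rule finite_subset)
  then obtain col where col: "proper_edge_colouring {e. shadow P e = 1} a b col"
    using proper_edge_colouring_exists degree_le_two_single_edges[OF matching] by blast
  note Q = trivial_lift_matching_from_colouring[OF matching col]
  show thesis
  proof (rule that)
    show "shadow {(e, i). shadow P e = 2 \<or> (shadow P e = 1 \<and> i = col e)} = shadow P" by (rule Q(2))
    then show "{(e, i). shadow P e = 2 \<or> (shadow P e = 1 \<and> i = col e)} \<in> lift_matchings X a b (\<lambda>_. False)"
      using Q(1) subset_if_same_shadow[OF _ sub] unfolding lift_matchings_def by blast
  qed
qed

lemma lift_matchings_embed_trivial:
  assumes "finite X"
  obtains f where "inj_on f (lift_matchings X a b s)"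
    "f ` lift_matchings X a b s \<subseteq> lift_matchings X a b (\<lambda>_. False)" "\<And>P. card (f P) = card P"
proof -
  let ?S = "lift_matchings X a b"
  \<comment> \<open>For every shadow, fix a reference lift matching with that shadow in each of the two lifts.\<close>
  define ref where "ref \<sigma> c = (SOME Q. Q \<in> ?S \<sigma> \<and> shadow Q = c)" for \<sigma> c
  have ref: "ref \<sigma> (shadow P) \<in> ?S \<sigma> \<and> shadow (ref \<sigma> (shadow P)) = shadow P"
    if P: "P \<in> ?S s" and \<sigma>: "\<sigma> = s \<or> \<sigma> = (\<lambda>_. False)" for P \<sigma>
  proof -
    obtain Q where "Q \<in> ?S (\<lambda>_. False)" "shadow Q = shadow P"
      using assms P by (rule trivial_lift_matching_same_shadow)
    then have "\<exists>Q. Q \<in> ?S \<sigma> \<and> shadow Q = shadow P" using P \<sigma> by blast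
    then show ?thesis unfolding ref_def by (rule someI_ex)
  qed
  define D where "D c e = (((e, True) \<in> ref s c) \<noteq> ((e, True) \<in> ref (\<lambda>_. False) c))" for c e
  define f where "f P = flip_layers (D (shadow P)) P" for P
  show thesis
  proof (rule that)
    show "f ` ?S s \<subseteq> ?S (\<lambda>_. False)"
    proof
      fix Q assume "Q \<in> f ` ?S s"
      then obtain P where P: "P \<in> ?S s" "Q = f P" by blast
      have "lift_matching a b (\<lambda>_. False) (f P)"
        unfolding f_def D_def using P(1) ref[OF P(1)] unfolding lift_matchings_def
        by (blast intro: lift_matching_flip_layers)
      moreover have "f P \<subseteq> X \<times> UNIV"
        using P(1) flip_layers_subset unfolding f_def lift_matchings_def by blast
      ultimately show "Q \<in> ?S (\<lambda>_. False)" unfolding P(2) lift_matchings_def by blast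
    qed
    show "inj_on f (?S s)"
    proof
      fix P P' assume eq: "f P = f P'"
      have "shadow P = shadow (f P)" unfolding f_def by simp
      also have "\<dots> = shadow P'" unfolding eq unfolding f_def by simp
      finally have "shadow P = shadow P'" .
      have "P = flip_layers (D (shadow P)) (f P)" unfolding f_def by simp
      also have "\<dots> = flip_layers (D (shadow P')) (f P')" using eq \<open>shadow P = shadow P'\<close> by simp
      also have "\<dots> = P'" unfolding f_def by simp
      finally show "P = P'" .
    qed
    show "card (f P) = card P" for P unfolding f_def by (rule card_flip_layers)
  qed
qed

theorem card_lift_matchings_le:
  assumes "finite X"
  shows "card {P \<in> lift_matchings X a b s. card P = k}
       \<le> card {P \<in> lift_matchings X a b (\<lambda>_. False). card P = k}"
proof -
  obtain f where f: "inj_on f (lift_matchings X a b s)"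
    "f ` lift_matchings X a b s \<subseteq> lift_matchings X a b (\<lambda>_. False)" "\<And>P. card (f P) = card P"
    using lift_matchings_embed_trivial[OF assms, where a = a and b = b and s = s] by blast
  show ?thesis
  proof (rule card_inj_on_le)
    show "inj_on f {P \<in> lift_matchings X a b s. card P = k}" using f(1) by (rule inj_on_subset) auto
    show "f ` {P \<in> lift_matchings X a b s. card P = k} \<subseteq> {P \<in> lift_matchings X a b (\<lambda>_. False). card P = k}"
      using f(2,3) by auto
    show "finite {P \<in> lift_matchings X a b (\<lambda>_. False). card P = k}"
      using finite_lift_matchings[OF assms, where a = a and b = b and s = "\<lambda>_. False"] by simp
  qed
qed

section \<open>Matching polynomials and the doubled graph\<close>

lemma matching_iff_pairwise: "matching E M \<longleftrightarrow> M \<subseteq> E \<and> pairwise disjnt M"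
  unfolding matching_def pairwise_def disjnt_def by blast

lemma finite_matchings: "finite E \<Longrightarrow> finite {M. matching E M}"
  unfolding matching_def by (rule finite_subset[of _ "Pow E"]) auto

lemma sum_matchings_eq:
  assumes "finite E" "card E \<le> N"
  shows "(\<Sum>k\<le>N. real (num_matchings E k) * t ^ k) = (\<Sum>M\<in>{M. matching E M}. t ^ card M)"
proof -
  have "card ` {M. matching E M} \<subseteq> {..N}"
    using assms card_mono unfolding matching_def by fastforce
  then have "(\<Sum>M\<in>{M. matching E M}. t ^ card M)
      = (\<Sum>k\<le>N. \<Sum>M\<in>{M \<in> {M. matching E M}. card M = k}. t ^ card M)"
    by (rule sum.group[OF finite_matchings[OF assms(1)] finite_atMost, symmetric])
  also have "\<dots> = (\<Sum>k\<le>N. real (num_matchings E k) * t ^ k)"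
    unfolding num_matchings_def by simp
  finally show ?thesis ..
qed

lemma matching_poly_eq_sum_matchings:
  "finite E \<Longrightarrow> matching_poly E t = (\<Sum>M\<in>{M. matching E M}. t ^ card M)"
  unfolding matching_poly_def by (rule sum_matchings_eq) auto

lemma matching_poly_mono:
  assumes "finite E1" "finite E2" "\<And>k. num_matchings E1 k \<le> num_matchings E2 k" "t \<ge> 0"
  shows "matching_poly E1 t \<le> matching_poly E2 t"
proof -
  define N where "N = card E1 + card E2"
  have "matching_poly E1 t = (\<Sum>k\<le>N. real (num_matchings E1 k) * t ^ k)"
    using assms(1) unfolding matching_poly_eq_sum_matchings[OF assms(1)] N_def by (simp add: sum_matchings_eq)
  also have "\<dots> \<le> (\<Sum>k\<le>N. real (num_matchings E2 k) * t ^ k)"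
    using assms(3,4) by (intro sum_mono mult_right_mono) auto
  also have "\<dots> = matching_poly E2 t"
    using assms(2) unfolding matching_poly_eq_sum_matchings[OF assms(2)] N_def by (simp add: sum_matchings_eq)
  finally show ?thesis .
qed

definition edge_copy :: "bool \<Rightarrow> 'a set \<Rightarrow> ('a \<times> bool) set" where
  "edge_copy i e = (\<lambda>x. (x, i)) ` e"

lemma edge_copy_eq_iff:
  assumes "e \<noteq> {}"
  shows "edge_copy i e = edge_copy j e' \<longleftrightarrow> i = j \<and> e = e'"
proof
  assume eq: "edge_copy i e = edge_copy j e'"
  obtain x where "x \<in> e" using assms by blast
  then have "(x, i) \<in> edge_copy j e'" using eq unfolding edge_copy_def by blast
  then have "i = j" unfolding edge_copy_def by auto
  moreover have "fst ` edge_copy i e = e" "fst ` edge_copy j e' = e'"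
    unfolding edge_copy_def by (simp_all add: image_image)
  ultimately show "i = j \<and> e = e'" using eq by metis
qed simp

lemma disjnt_edge_copy_iff: "disjnt (edge_copy i e) (edge_copy j e') \<longleftrightarrow> i \<noteq> j \<or> disjnt e e'"
  unfolding edge_copy_def disjnt_def by auto

lemma edge_copy_mem_image:
  assumes "{} \<notin> E" "M \<subseteq> E"
  shows "edge_copy i e \<in> edge_copy j ` M \<longleftrightarrow> i = j \<and> e \<in> M"
proof
  assume "edge_copy i e \<in> edge_copy j ` M"
  then obtain e' where "e' \<in> M" "edge_copy j e' = edge_copy i e" by auto
  moreover have "e' \<noteq> {}" using \<open>e' \<in> M\<close> assms by auto
  ultimately show "i = j \<and> e \<in> M" using edge_copy_eq_iff by metis
qed auto

lemma double_graph_eq: "double_graph E = edge_copy False ` E \<union> edge_copy True ` E"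
proof -
  have "double_graph E = (\<Union>i. edge_copy i ` E)"
    unfolding double_graph_def edge_copy_def by blast
  then show ?thesis by (simp add: UNIV_bool Un_commute)
qed

lemma pairwise_Un_separated:
  "(\<And>x y. x \<in> A \<Longrightarrow> y \<in> B \<Longrightarrow> R x y \<and> R y x) \<Longrightarrow> pairwise R (A \<union> B) \<longleftrightarrow> pairwise R A \<and> pairwise R B"
  unfolding pairwise_def by blast

lemma matching_edge_copies:
  assumes "{} \<notin> E"
  shows "matching (double_graph E) (edge_copy False ` M1 \<union> edge_copy True ` M2)
     \<longleftrightarrow> matching E M1 \<and> matching E M2"
proof -
  have subset_iff: "edge_copy i ` M \<subseteq> double_graph E \<longleftrightarrow> M \<subseteq> E" for i M
    unfolding double_graph_eq image_subset_iff Un_iff edge_copy_mem_image[OF assms subset_refl]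
    by (cases i) auto
  have copies: "pairwise disjnt (edge_copy i ` M) \<longleftrightarrow> pairwise disjnt M" if "M \<subseteq> E" for i M
  proof -
    have "inj_on (edge_copy i) M" using that assms edge_copy_eq_iff by (metis inj_onI subsetD)
    then show ?thesis
      unfolding pairwise_image by (simp add: disjnt_edge_copy_iff inj_on_eq_iff pairwise_def)
  qed
  have "pairwise disjnt (edge_copy False ` M1 \<union> edge_copy True ` M2)
      \<longleftrightarrow> pairwise disjnt (edge_copy False ` M1) \<and> pairwise disjnt (edge_copy True ` M2)"
    by (rule pairwise_Un_separated) (auto simp: disjnt_edge_copy_iff)
  then show ?thesis
    unfolding matching_iff_pairwise Un_subset_iff subset_iff using copies by blast
qed

lemma edge_copies_split:
  assumes "M \<subseteq> double_graph E"
  shows "edge_copy False ` {e. edge_copy False e \<in> M} \<union> edge_copy True ` {e. edge_copy True e \<in> M} = M"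
proof (rule set_eqI, rule iffI)
  fix h assume "h \<in> M"
  then obtain e i where "h = edge_copy i e" using assms unfolding double_graph_eq by blast
  then show "h \<in> edge_copy False ` {e. edge_copy False e \<in> M} \<union> edge_copy True ` {e. edge_copy True e \<in> M}"
    using \<open>h \<in> M\<close> by (cases i) auto
qed auto

lemma bij_betw_matchings_double_graph:
  assumes nonempty: "{} \<notin> E"
  shows "bij_betw (\<lambda>(M1, M2). edge_copy False ` M1 \<union> edge_copy True ` M2)
           ({M. matching E M} \<times> {M. matching E M}) {M. matching (double_graph E) M}"
proof (rule bij_betw_byWitness[where f' = "\<lambda>M. ({e. edge_copy False e \<in> M}, {e. edge_copy True e \<in> M})"])
  have layers: "{e. edge_copy False e \<in> edge_copy False ` M1 \<union> edge_copy True ` M2} = M1"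
    "{e. edge_copy True e \<in> edge_copy False ` M1 \<union> edge_copy True ` M2} = M2"
    if "matching E M1" "matching E M2" for M1 M2
    using that edge_copy_mem_image[OF nonempty] unfolding matching_def by auto
  then show "\<forall>MM\<in>{M. matching E M} \<times> {M. matching E M}.
      (\<lambda>M. ({e. edge_copy False e \<in> M}, {e. edge_copy True e \<in> M}))
        ((\<lambda>(M1, M2). edge_copy False ` M1 \<union> edge_copy True ` M2) MM) = MM"
    by auto
  have split: "edge_copy False ` {e. edge_copy False e \<in> M} \<union> edge_copy True ` {e. edge_copy True e \<in> M} = M"
    if "matching (double_graph E) M" for M
    by (rule edge_copies_split[of M E]) (use that in \<open>simp add: matching_def\<close>)
  then show "\<forall>M\<in>{M. matching (double_graph E) M}.
      (\<lambda>(M1, M2). edge_copy False ` M1 \<union> edge_copy True ` M2)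
        ((\<lambda>M. ({e. edge_copy False e \<in> M}, {e. edge_copy True e \<in> M})) M) = M"
    by simp
  show "(\<lambda>(M1, M2). edge_copy False ` M1 \<union> edge_copy True ` M2) ` ({M. matching E M} \<times> {M. matching E M})
      \<subseteq> {M. matching (double_graph E) M}"
    using matching_edge_copies[OF nonempty] by auto
  show "(\<lambda>M. ({e. edge_copy False e \<in> M}, {e. edge_copy True e \<in> M})) ` {M. matching (double_graph E) M}
      \<subseteq> {M. matching E M} \<times> {M. matching E M}"
    using matching_edge_copies[OF nonempty] split by (smt (verit) image_subset_iff mem_Collect_eq mem_Sigma_iff)
qed

lemma matching_poly_double_graph:
  assumes fin: "finite E" and nonempty: "{} \<notin> E"
  shows "matching_poly (double_graph E) t = (matching_poly E t)\<^sup>2"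
proof -
  let ?Ms = "{M. matching E M}"
  have card_copies: "card (edge_copy False ` M1 \<union> edge_copy True ` M2) = card M1 + card M2"
    if "M1 \<in> ?Ms" "M2 \<in> ?Ms" for M1 M2
  proof -
    have sub: "M1 \<subseteq> E" "M2 \<subseteq> E" using that unfolding matching_def by auto
    then have "finite M1" "finite M2" using fin finite_subset by auto
    moreover have "inj_on (edge_copy i) M" if "M \<subseteq> E" for i M
      using that nonempty edge_copy_eq_iff by (metis inj_onI subsetD)
    moreover have "edge_copy False ` M1 \<inter> edge_copy True ` M2 = {}"
      using edge_copy_mem_image[OF nonempty sub(2)] by blast
    ultimately show ?thesis using sub by (simp add: card_Un_disjoint card_image)
  qed
  have "finite (double_graph E)" using fin unfolding double_graph_eq by simp
  then have "matching_poly (double_graph E) t = (\<Sum>M\<in>{M. matching (double_graph E) M}. t ^ card M)"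
    by (rule matching_poly_eq_sum_matchings)
  also have "\<dots> = (\<Sum>(M1, M2)\<in>?Ms \<times> ?Ms. t ^ card (edge_copy False ` M1 \<union> edge_copy True ` M2))"
    using sum.reindex_bij_betw[OF bij_betw_matchings_double_graph[OF nonempty], of "\<lambda>M. t ^ card M"]
    by (simp add: case_prod_unfold)
  also have "\<dots> = (\<Sum>(M1, M2)\<in>?Ms \<times> ?Ms. t ^ card M1 * t ^ card M2)"
    by (rule sum.cong) (auto simp: card_copies power_add)
  also have "\<dots> = (\<Sum>M\<in>?Ms. t ^ card M) * (\<Sum>M\<in>?Ms. t ^ card M)"
    by (simp add: sum_product sum.cartesian_product)
  also have "\<dots> = (matching_poly E t)\<^sup>2"
    by (simp add: matching_poly_eq_sum_matchings[OF fin] power2_eq_square)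
  finally show ?thesis .
qed

section \<open>Bipartite graphs and their 2-lifts\<close>

definition lift_edge :: "('e \<Rightarrow> 'v) \<Rightarrow> ('e \<Rightarrow> 'v) \<Rightarrow> ('e \<Rightarrow> bool) \<Rightarrow> 'e \<times> bool \<Rightarrow> ('v \<times> bool) set" where
  "lift_edge a b s = (\<lambda>(e, i). {(a e, i), (b e, i \<noteq> s e)})"

lemma simple_graph_edgeE:
  assumes "simple_graph V E" "e \<in> E"
  obtains u v where "u \<in> V" "v \<in> V" "u \<noteq> v" "e = {u, v}"
proof -
  have "\<forall>e\<in>E. \<exists>u v. u \<in> V \<and> v \<in> V \<and> u \<noteq> v \<and> e = {u, v}"
    using assms(1) unfolding simple_graph_def by (rule conjunct2)
  then have "\<exists>u v. u \<in> V \<and> v \<in> V \<and> u \<noteq> v \<and> e = {u, v}" using assms(2) by (rule bspec)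
  then show thesis using that by blast
qed

lemma two_lift_edgeE:
  assumes "two_lift V E EH" "h \<in> EH"
  obtains u v i j where "u \<in> V" "v \<in> V" "h = {(u, i), (v, j)}"
proof -
  have "\<forall>h\<in>EH. \<exists>u v i j. u \<in> V \<and> v \<in> V \<and> h = {(u, i), (v, j)}"
    using assms(1) unfolding two_lift_def by (rule conjunct1)
  then have "\<exists>u v i j. u \<in> V \<and> v \<in> V \<and> h = {(u, i), (v, j)}" using assms(2) by (rule bspec)
  then show thesis using that by blast
qed

lemma simple_graph_finite_edges: "simple_graph V E \<Longrightarrow> finite E"
  unfolding simple_graph_def by (auto intro: finite_subset[of E "Pow V"])

lemma simple_graph_nonempty_edges: "simple_graph V E \<Longrightarrow> {} \<notin> E"
  unfolding simple_graph_def by blast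

lemma bipartite_endpoints:
  assumes "simple_graph V E" "bipartite V E"
  obtains a b where "\<forall>e\<in>E. e = {a e, b e}" "\<forall>e\<in>E. \<forall>e'\<in>E. a e \<noteq> b e'"
proof -
  obtain A where A: "\<forall>u v. {u, v} \<in> E \<longrightarrow> (u \<in> A \<longleftrightarrow> v \<notin> A)"
    using assms(2) unfolding bipartite_def by blast
  have "\<forall>e\<in>E. \<exists>x y. e = {x, y} \<and> x \<in> A \<and> y \<notin> A"
  proof
    fix e assume "e \<in> E"
    obtain u v where "u \<in> V" "v \<in> V" "u \<noteq> v" "e = {u, v}"
      using assms(1) \<open>e \<in> E\<close> by (rule simple_graph_edgeE)
    then show "\<exists>x y. e = {x, y} \<and> x \<in> A \<and> y \<notin> A"
      using A \<open>e \<in> E\<close> by (metis insert_commute)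
  qed
  then obtain a b where ab: "\<forall>e\<in>E. e = {a e, b e} \<and> a e \<in> A \<and> b e \<notin> A" by metis
  then have "\<forall>e\<in>E. e = {a e, b e}" by blast
  moreover have "\<forall>e\<in>E. \<forall>e'\<in>E. a e \<noteq> b e'" using ab by metis
  ultimately show thesis by (rule that)
qed

lemma two_lift_non_edge:
  assumes "two_lift V E EH" "u \<in> V" "v \<in> V" "{u, v} \<notin> E"
  shows "{(u, i), (v, j)} \<notin> EH"
proof -
  have "{(u, False), (v, False)} \<notin> EH \<and> {(u, True), (v, True)} \<notin> EH \<and>
      {(u, False), (v, True)} \<notin> EH \<and> {(u, True), (v, False)} \<notin> EH"
    using assms unfolding two_lift_def by blast
  then show ?thesis by (cases i; cases j) simp_all
qed

lemma two_lift_edge: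
  assumes "two_lift V E EH" "u \<in> V" "v \<in> V" "{u, v} \<in> E"
  shows "{(u, i), (v, j)} \<in> EH \<longleftrightarrow> j = (i \<noteq> ({(u, False), (v, True)} \<in> EH))"
proof -
  have "({(u, False), (v, False)} \<in> EH \<and> {(u, True), (v, True)} \<in> EH \<and>
       {(u, False), (v, True)} \<notin> EH \<and> {(u, True), (v, False)} \<notin> EH) \<or>
      ({(u, False), (v, True)} \<in> EH \<and> {(u, True), (v, False)} \<in> EH \<and>
       {(u, False), (v, False)} \<notin> EH \<and> {(u, True), (v, True)} \<notin> EH)"
    using assms unfolding two_lift_def by blast
  then show ?thesis by (cases i; cases j) auto
qed

lemma two_lift_eq_lift_edges:
  assumes G: "simple_graph V E" and H: "two_lift V E EH" and ends: "\<forall>e\<in>E. e = {a e, b e}"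
  obtains s where "EH = lift_edge a b s ` (E \<times> UNIV)"
proof
  define s where "s e = ({(a e, False), (b e, True)} \<in> EH)" for e
  have lift_char: "{(a e, i), (b e, j)} \<in> EH \<longleftrightarrow> j = (i \<noteq> s e)" if e: "e \<in> E" for e i j
  proof -
    obtain u v where "u \<in> V" "v \<in> V" "u \<noteq> v" "e = {u, v}" using G e by (rule simple_graph_edgeE)
    then have "e \<subseteq> V" by simp
    moreover have "a e \<in> e" "b e \<in> e" "{a e, b e} \<in> E" using ends e by (metis insertCI)+
    ultimately show ?thesis unfolding s_def using two_lift_edge[OF H] by blast
  qed
  show "EH = lift_edge a b s ` (E \<times> UNIV)"
  proof
    show "lift_edge a b s ` (E \<times> UNIV) \<subseteq> EH"
      using lift_char unfolding lift_edge_def by auto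
  next
    show "EH \<subseteq> lift_edge a b s ` (E \<times> UNIV)"
    proof
      fix h assume "h \<in> EH"
      obtain u v i j where uv: "u \<in> V" "v \<in> V" "h = {(u, i), (v, j)}"
        using H \<open>h \<in> EH\<close> by (rule two_lift_edgeE)
      then have "{u, v} \<in> E" using two_lift_non_edge[OF H] \<open>h \<in> EH\<close> by blast
      then obtain e where e: "e \<in> E" "{a e, b e} = {u, v}" using ends by metis
      then consider "u = a e" "v = b e" | "u = b e" "v = a e" by (metis doubleton_eq_iff)
      then show "h \<in> lift_edge a b s ` (E \<times> UNIV)"
      proof cases
        case 1
        then have "h = lift_edge a b s (e, i)"
          using lift_char[OF e(1)] \<open>h \<in> EH\<close> uv(3) unfolding lift_edge_def by auto
        then show ?thesis using e(1) by blast
      next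
        case 2
        then have "h = lift_edge a b s (e, j)"
          using lift_char[OF e(1)] \<open>h \<in> EH\<close> uv(3) unfolding lift_edge_def by (auto simp: insert_commute)
        then show ?thesis using e(1) by blast
      qed
    qed
  qed
qed

lemma double_graph_eq_lift_edges:
  assumes ends: "\<forall>e\<in>E. e = {a e, b e}"
  shows "double_graph E = lift_edge a b (\<lambda>_. False) ` (E \<times> UNIV)"
proof -
  have copy: "(\<lambda>x. (x, i)) ` e = lift_edge a b (\<lambda>_. False) (e, i)" if "e \<in> E" for e i
  proof -
    have "(\<lambda>x. (x, i)) ` e = (\<lambda>x. (x, i)) ` {a e, b e}" using ends that by metis
    then show ?thesis unfolding lift_edge_def by simp
  qed
  show ?thesis
  proof (intro set_eqI iffI)
    fix h assume "h \<in> double_graph E"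
    then obtain e i where "e \<in> E" "h = (\<lambda>x. (x, i)) ` e" unfolding double_graph_def by blast
    then show "h \<in> lift_edge a b (\<lambda>_. False) ` (E \<times> UNIV)" using copy by blast
  next
    fix h assume "h \<in> lift_edge a b (\<lambda>_. False) ` (E \<times> UNIV)"
    then obtain e i where "e \<in> E" "h = lift_edge a b (\<lambda>_. False) (e, i)" by blast
    then show "h \<in> double_graph E" using copy unfolding double_graph_def by blast
  qed
qed

lemma num_matchings_image:
  assumes inj: "inj_on h X"
  shows "num_matchings (h ` X) k = card {P. P \<subseteq> X \<and> pairwise (\<lambda>p q. disjnt (h p) (h q)) P \<and> card P = k}"
proof -
  let ?P = "{P. P \<subseteq> X \<and> pairwise (\<lambda>p q. disjnt (h p) (h q)) P \<and> card P = k}"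
  have image_props: "pairwise disjnt (h ` P) \<longleftrightarrow> pairwise (\<lambda>p q. disjnt (h p) (h q)) P"
      "card (h ` P) = card P" if "P \<subseteq> X" for P
  proof -
    have inj_P: "inj_on h P" using inj that by (rule inj_on_subset)
    show "card (h ` P) = card P" using inj_P by (rule card_image)
    show "pairwise disjnt (h ` P) \<longleftrightarrow> pairwise (\<lambda>p q. disjnt (h p) (h q)) P"
      unfolding pairwise_image pairwise_def by (simp add: inj_on_eq_iff[OF inj_P])
  qed
  have "{M. matching (h ` X) M \<and> card M = k} = image h ` ?P"
  proof (intro set_eqI iffI)
    fix M assume "M \<in> {M. matching (h ` X) M \<and> card M = k}"
    then obtain P where P: "P \<subseteq> X" "M = h ` P" "pairwise disjnt M" "card M = k"
      unfolding matching_iff_pairwise subset_image_iff by blast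
    show "M \<in> image h ` ?P"
    proof (rule image_eqI)
      show "M = h ` P" by (rule P(2))
      show "P \<in> ?P" using P image_props[OF P(1)] by simp
    qed
  next
    fix M assume "M \<in> image h ` ?P"
    then obtain P where "P \<in> ?P" "M = h ` P" by blast
    then show "M \<in> {M. matching (h ` X) M \<and> card M = k}"
      using image_props[of P] unfolding matching_iff_pairwise by auto
  qed
  moreover have "inj_on (image h) ?P"
    using inj_on_image_Pow[OF inj] by (rule inj_on_subset) auto
  ultimately show ?thesis unfolding num_matchings_def by (simp add: card_image)
qed

lemma num_matchings_lift_edges:
  assumes sides: "\<forall>e\<in>E. \<forall>e'\<in>E. a e \<noteq> b e'" and ends: "inj_on (\<lambda>e. (a e, b e)) E"
  shows "num_matchings (lift_edge a b s ` (E \<times> UNIV)) k = card {P \<in> lift_matchings E a b s. card P = k}"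
proof -
  have disjnt_iff: "disjnt (lift_edge a b s p) (lift_edge a b s q) \<longleftrightarrow> lift_disjoint a b s p q"
    if pq: "p \<in> E \<times> UNIV" "q \<in> E \<times> UNIV" for p q
  proof -
    obtain e i e' j where "p = (e, i)" "q = (e', j)" "e \<in> E" "e' \<in> E" using pq by auto
    moreover from this have "a e \<noteq> b e'" "a e' \<noteq> b e" using sides by auto
    ultimately show ?thesis unfolding lift_edge_def disjnt_def by auto
  qed
  have "inj_on (lift_edge a b s) (E \<times> UNIV)"
  proof
    fix p q assume pq: "p \<in> E \<times> UNIV" "q \<in> E \<times> UNIV" "lift_edge a b s p = lift_edge a b s q"
    then have "a (fst p) = a (fst q) \<and> b (fst p) = b (fst q) \<and> snd p = snd q"
      using sides unfolding lift_edge_def by (auto simp: doubleton_eq_iff split: prod.splits)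
    then show "p = q" using ends pq(1,2) by (auto simp: inj_on_def prod_eq_iff)
  qed
  then have "num_matchings (lift_edge a b s ` (E \<times> UNIV)) k
      = card {P. P \<subseteq> E \<times> UNIV \<and> pairwise (\<lambda>p q. disjnt (lift_edge a b s p) (lift_edge a b s q)) P \<and> card P = k}"
    by (rule num_matchings_image)
  also have "\<dots> = card {P \<in> lift_matchings E a b s. card P = k}"
  proof -
    have "pairwise (\<lambda>p q. disjnt (lift_edge a b s p) (lift_edge a b s q)) P \<longleftrightarrow> lift_matching a b s P"
      if "P \<subseteq> E \<times> UNIV" for P
      using that disjnt_iff unfolding lift_matching_def pairwise_def by (metis (no_types, lifting) subsetD)
    then show ?thesis unfolding lift_matchings_def by (metis (no_types, lifting) mem_Collect_eq)
  qed
  finally show ?thesis .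
qed

lemma two_lift_finite:
  assumes "simple_graph V E" "two_lift V E EH"
  shows "finite EH"
proof (rule finite_subset)
  show "EH \<subseteq> Pow (V \<times> UNIV)"
  proof
    fix h assume "h \<in> EH"
    obtain u v i j where "u \<in> V" "v \<in> V" "h = {(u, i), (v, j)}"
      using assms(2) \<open>h \<in> EH\<close> by (rule two_lift_edgeE)
    then show "h \<in> Pow (V \<times> UNIV)" by auto
  qed
  show "finite (Pow (V \<times> (UNIV :: bool set)))"
    using assms(1) unfolding simple_graph_def by (simp add: finite_cartesian_product)
qed

theorem num_matchings_two_lift_le:
  assumes G: "simple_graph V E" "bipartite V E" and H: "two_lift V E EH"
  shows "num_matchings EH k \<le> num_matchings (double_graph E) k"
proof -
  obtain a b where ends: "\<forall>e\<in>E. e = {a e, b e}" and sides: "\<forall>e\<in>E. \<forall>e'\<in>E. a e \<noteq> b e'"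
    using G by (rule bipartite_endpoints)
  obtain s where EH: "EH = lift_edge a b s ` (E \<times> UNIV)"
    using G(1) H ends by (rule two_lift_eq_lift_edges)
  have inj: "inj_on (\<lambda>e. (a e, b e)) E"
    using ends by (intro inj_onI) (metis prod.inject)
  show ?thesis
    unfolding EH double_graph_eq_lift_edges[OF ends] num_matchings_lift_edges[OF sides inj]
    by (rule card_lift_matchings_le[OF simple_graph_finite_edges[OF G(1)]])
qed

theorem lemma4p2:
  fixes V :: "'a set" and E :: "'a set set" and EH :: "('a \<times> bool) set set"
  assumes "simple_graph V E" and "bipartite V E" and "two_lift V E EH"
  shows "(\<forall>k. num_matchings (double_graph E) k \<ge> num_matchings EH k) \<and>
         (\<forall>t::real. t \<ge> 0 \<longrightarrow> (matching_poly E t)\<^sup>2 \<ge> matching_poly EH t)"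
proof -
  have fin: "finite E" using assms(1) by (rule simple_graph_finite_edges)
  have coeffs: "num_matchings EH k \<le> num_matchings (double_graph E) k" for k
    using assms by (rule num_matchings_two_lift_le)
  have "matching_poly EH t \<le> (matching_poly E t)\<^sup>2" if "t \<ge> 0" for t
  proof -
    have "finite EH" using assms(1,3) by (rule two_lift_finite)
    moreover have "finite (double_graph E)" using fin unfolding double_graph_eq by simp
    ultimately have "matching_poly EH t \<le> matching_poly (double_graph E) t"
      using coeffs that by (rule matching_poly_mono)
    also have "\<dots> = (matching_poly E t)\<^sup>2"
      using fin simple_graph_nonempty_edges[OF assms(1)] by (rule matching_poly_double_graph)
    finally show ?thesis .
  qed
  then show ?thesis using coeffs by blast
qed

end
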